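(* Let $N\ge 2$ and let $p,p'$ be two paths of length $N$ with edge matrices $E$ and $E'$. Then the shapes of $p$ and $p'$ are equivalent if and only if $E'$ is obtained from $E$ by a circular shift of the columns, i.e. there is an integer $k$ such that for all $n\in\{0,\dots,N-1\}$, column $n$ of $E'$ equals column $(n+k)\bmod N$ of $E$.
   Context: A path of length $N$ is a vector $p=(p_0,\dots,p_{N-1})$ whose entries are the integers $0,\dots,N-1$ in some order; indices are cyclic, $p_N=p_0$, $s_{-1}=s_{N-1}$; $x\bmod N$ denotes the remainder in $\{0,\dots,N-1\}$. Nodes $0,\dots,N-1$ are placed at equally spaced points clockwise around a circle; the shape of $p$ is the set of chords joining node $p_n$ to node $p_{n+1}$, $n=0,\dots,N-1$. Two shapes are equivalent if some rotation of the plane about the center of the circle maps one onto the other. The path differences are $d_n=p_{n+1}-p_n$, and the steps are $s_n=d_n$ if $|d_n|<N/2$; $s_n=N/2$ if $|d_n|=N/2$; $s_n=d_n-N$ if $d_n>N/2$; $s_n=d_n+N$ if $d_n<-N/2$. The edge matrix $E=(e_{in})\in\mathbb{Z}^{2\times N}$ of $p$: for node $n$ let $k$ be the index with $p_k=n$; take $s_k$ and $-s_{k-1}$, replace each by $0$ if its absolute value equals $N/2$, and let $e_{1n}\le e_{2n}$ be these two integers sorted in nondecreasing order. *)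

theory Defs
  imports "HOL-Analysis.Analysis"
begin

definition is_path :: "nat \<Rightarrow> (nat \<Rightarrow> nat) \<Rightarrow> bool" where
  "is_path N p \<longleftrightarrow> bij_betw p {..<N} {..<N}"

definition node :: "nat \<Rightarrow> nat \<Rightarrow> complex" where
  "node N j = cis (- 2 * pi * real j / real N)"

definition chord :: "nat \<Rightarrow> nat \<Rightarrow> nat \<Rightarrow> complex set" where
  "chord N a b = closed_segment (node N a) (node N b)"

definition shape :: "nat \<Rightarrow> (nat \<Rightarrow> nat) \<Rightarrow> complex set set" where
  "shape N p = (\<lambda>n. chord N (p n) (p (Suc n mod N))) ` {..<N}"

definition shapes_equiv :: "complex set set \<Rightarrow> complex set set \<Rightarrow> bool" where
  "shapes_equiv S T \<longleftrightarrow> (\<exists>\<theta>::real. (\<lambda>C. (\<lambda>z. cis \<theta> * z) ` C) ` S = T)"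

definition step :: "nat \<Rightarrow> (nat \<Rightarrow> nat) \<Rightarrow> nat \<Rightarrow> int" where
  "step N p n = (let d = int (p (Suc n mod N)) - int (p n) in
     if 2 * \<bar>d\<bar> < int N then d
     else if 2 * \<bar>d\<bar> = int N then int N div 2
     else if d > 0 then d - int N else d + int N)"

definition zero_half :: "nat \<Rightarrow> int \<Rightarrow> int" where
  "zero_half N x = (if 2 * \<bar>x\<bar> = int N then 0 else x)"

text \<open>Column n of the edge matrix, as the pair (e_1n, e_2n) with e_1n \<le> e_2n.\<close>
definition edge_col :: "nat \<Rightarrow> (nat \<Rightarrow> nat) \<Rightarrow> nat \<Rightarrow> int \<times> int" where
  "edge_col N p n = (let k = the_inv_into {..<N} p n;
       a = zero_half N (step N p k);
       b = zero_half N (- step N p ((k + N - 1) mod N))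
     in (min a b, max a b))"

end

theory Submission
  imports Defs
begin

text \<open>
  A chord meets the circle only in its two endpoints, so a rotation carrying one shape onto
  another carries nodes to nodes; it is therefore a rotation by a multiple of \<open>2\<pi>/N\<close>, and the
  shapes are equivalent iff the edge sets of the two paths differ by a cyclic shift of the node
  labels. Column \<open>n\<close> of the edge matrix records, up to order, the offsets from node \<open>n\<close> to its two
  neighbours on the path. An offset determines the neighbour and is invariant under cyclic
  shifts, so equality of the shifted columns says exactly that the shift maps neighbourhoods to
  neighbourhoods, i.e. maps one edge set onto the other.
\<close>

section \<open>Cyclic shifts and offsets of nodes\<close>

definition centred_diff :: "nat \<Rightarrow> int \<Rightarrow> int" where
  "centred_diff N d = (if 2 * \<bar>d\<bar> < int N then d
     else if 2 * \<bar>d\<bar> = int N then int N div 2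
     else if d > 0 then d - int N else d + int N)"

lemma step_eq_centred_diff: "step N p n = centred_diff N (int (p (Suc n mod N)) - int (p n))"
  by (simp add: step_def centred_diff_def Let_def)

text \<open>The entry that a neighbour \<open>y\<close> of node \<open>x\<close> contributes to column \<open>x\<close> of the edge matrix.\<close>

definition node_offset :: "nat \<Rightarrow> nat \<Rightarrow> nat \<Rightarrow> int" where
  "node_offset N x y = zero_half N (centred_diff N (int y - int x))"

lemma div_2_eq_abs: "2 * \<bar>d\<bar> = int N \<Longrightarrow> int N div 2 = \<bar>d\<bar>"
  by auto

lemma zero_half_uminus_centred_diff:
  "zero_half N (- centred_diff N d) = zero_half N (centred_diff N (- d))"
  using div_2_eq_abs[of d N] by (auto simp: zero_half_def centred_diff_def abs_if)

lemma centred_diff_add_period: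
  assumes "- int N < d" "d < 0"
  shows "centred_diff N (d + int N) = centred_diff N d"
  using assms by (auto simp: centred_diff_def)

lemma centred_diff_mod:
  assumes "- int N < d" "d < int N"
  shows "centred_diff N (d mod int N) = centred_diff N d"
proof (cases "d < 0")
  case True
  then have "d mod int N = d + int N"
    using assms mod_pos_pos_trivial[of "d + int N" "int N"] by simp
  then show ?thesis using True assms by (simp add: centred_diff_add_period)
qed (use assms in simp)

text \<open>\<open>zero_half\<close> erases only the antipodal offset \<open>N/2\<close>, so the offset still determines \<open>d\<close> modulo \<open>N\<close>.\<close>

lemma unzero_centred_diff:
  assumes "- int N < d" "d < int N" "d \<noteq> 0"
  defines "v \<equiv> zero_half N (centred_diff N d)"
  shows "(if v = 0 then int N div 2 else v) \<in> {d - int N, d, d + int N}"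
  using assms div_2_eq_abs[of d N] by (auto simp: zero_half_def centred_diff_def)

lemma inj_on_node_offset:
  assumes "x < N"
  shows "inj_on (node_offset N x) ({..<N} - {x})"
proof (rule inj_onI)
  have decode: "(int x + (if node_offset N x y = 0 then int N div 2 else node_offset N x y)) mod int N = int y"
    (is "(int x + ?v) mod _ = _") if y: "y \<in> {..<N} - {x}" for y
  proof -
    have "?v \<in> {int y - int x - int N, int y - int x, int y - int x + int N}"
      unfolding node_offset_def by (rule unzero_centred_diff) (use y assms in auto)
    then have "int N dvd (int x + ?v - int y)"
      by auto
    then have "(int x + ?v) mod int N = int y mod int N"
      by (simp add: mod_eq_dvd_iff)
    then show ?thesis using y by simp
  qed
  fix y z assume "y \<in> {..<N} - {x}" "z \<in> {..<N} - {x}" "node_offset N x y = node_offset N x z"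
  then show "y = z" using decode by (metis of_nat_eq_iff)
qed

definition rotate_node :: "nat \<Rightarrow> int \<Rightarrow> nat \<Rightarrow> nat" where
  "rotate_node N k j = nat ((int j + k) mod int N)"

lemma rotate_node_less: "N > 0 \<Longrightarrow> rotate_node N k j < N"
  unfolding rotate_node_def by (simp add: nat_less_iff)

lemma rotate_node_inverse:
  assumes "N > 0" "j < N"
  shows "rotate_node N (- k) (rotate_node N k j) = j"
proof -
  have "((int j + k) mod int N - k) mod int N = int j"
    using assms by (simp add: mod_diff_left_eq)
  then show ?thesis
    using assms by (simp add: rotate_node_def)
qed

lemma bij_betw_rotate_node: "N > 0 \<Longrightarrow> bij_betw (rotate_node N k) {..<N} {..<N}"
  by (rule bij_betwI[where g = "rotate_node N (- k)"])
    (auto simp: rotate_node_less rotate_node_inverse rotate_node_inverse[where k = "- k", simplified])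

lemma node_offset_rotate_node:
  assumes "a < N" "b < N"
  shows "node_offset N (rotate_node N k a) (rotate_node N k b) = node_offset N a b"
proof -
  define A where "A = (int a + k) mod int N"
  define B where "B = (int b + k) mod int N"
  have "0 \<le> A" "A < int N" "0 \<le> B" "B < int N"
    using assms by (simp_all add: A_def B_def)
  then have "centred_diff N (B - A) = centred_diff N ((B - A) mod int N)"
    by (intro centred_diff_mod[symmetric]) linarith+
  also have "(B - A) mod int N = (int b - int a) mod int N"
    unfolding A_def B_def by (simp add: mod_diff_eq)
  also have "centred_diff N \<dots> = centred_diff N (int b - int a)"
    using assms by (intro centred_diff_mod) linarith+
  finally have "centred_diff N (B - A) = centred_diff N (int b - int a)" .
  moreover have "rotate_node N k a = nat A" "rotate_node N k b = nat B"
    by (simp_all add: rotate_node_def A_def B_def)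
  ultimately show ?thesis
    using \<open>0 \<le> A\<close> \<open>0 \<le> B\<close> by (simp add: node_offset_def)
qed


section \<open>Neighbours in a cyclic path\<close>

definition neighbours :: "'a set set \<Rightarrow> 'a \<Rightarrow> 'a set" where
  "neighbours E x = {y. {x, y} \<in> E}"

lemma image_edges_eq_iff_neighbours:
  assumes f: "bij_betw f A B"
    and F: "F \<subseteq> {{a, b} | a b. a \<in> A \<and> b \<in> A}"
    and G: "G \<subseteq> {{a, b} | a b. a \<in> B \<and> b \<in> B}"
  shows "(\<lambda>e. f ` e) ` F = G \<longleftrightarrow> (\<forall>x\<in>A. neighbours G (f x) = f ` neighbours F x)"
proof
  have inj: "inj_on f A" using f by (rule bij_betw_imp_inj_on)
  assume FG: "(\<lambda>e. f ` e) ` F = G"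
  show "\<forall>x\<in>A. neighbours G (f x) = f ` neighbours F x"
  proof (intro ballI equalityI subsetI)
    fix x z assume x: "x \<in> A" and "z \<in> neighbours G (f x)"
    then obtain e where e: "e \<in> F" "{f x, z} = f ` e"
      using FG by (auto simp: neighbours_def)
    moreover from e(1) F obtain a b where ab: "e = {a, b}" "a \<in> A" "b \<in> A"
      by blast
    ultimately consider "f x = f a" "z = f b" | "f x = f b" "z = f a"
      by (auto simp: doubleton_eq_iff)
    then show "z \<in> f ` neighbours F x"
    proof cases
      case 1
      then have "x = a" using inj x ab by (auto simp: inj_on_eq_iff)
      then show ?thesis using 1 e ab by (auto simp: neighbours_def)
    next
      case 2
      then have "x = b" using inj x ab by (auto simp: inj_on_eq_iff)
      then have "{x, a} \<in> F" using e ab by (simp add: insert_commute)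
      then show ?thesis using 2 by (auto simp: neighbours_def)
    qed
  next
    fix x z assume "z \<in> f ` neighbours F x"
    then obtain y where "{x, y} \<in> F" "z = f y"
      by (auto simp: neighbours_def)
    then have "f ` {x, y} \<in> G"
      using FG by blast
    then show "z \<in> neighbours G (f x)"
      using \<open>z = f y\<close> by (simp add: neighbours_def)
  qed
next
  assume nbrs: "\<forall>x\<in>A. neighbours G (f x) = f ` neighbours F x"
  show "(\<lambda>e. f ` e) ` F = G"
  proof (intro equalityI subsetI)
    fix g assume "g \<in> (\<lambda>e. f ` e) ` F"
    then obtain a b where ab: "{a, b} \<in> F" "a \<in> A" "g = {f a, f b}"
      using F by blast
    then have "f b \<in> neighbours G (f a)"
      using nbrs by (auto simp: neighbours_def)
    then show "g \<in> G"
      using ab by (simp add: neighbours_def)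
  next
    fix g assume "g \<in> G"
    then obtain c d where g: "g = {c, d}" "c \<in> B"
      using G by blast
    then obtain a where a: "a \<in> A" "c = f a"
      using f by (auto simp: bij_betw_def)
    then have "d \<in> f ` neighbours F a"
      using nbrs \<open>g \<in> G\<close> g by (auto simp: neighbours_def)
    then obtain b where "{a, b} \<in> F" "d = f b"
      by (auto simp: neighbours_def)
    moreover have "g = f ` {a, b}"
      using g a \<open>d = f b\<close> by simp
    ultimately show "g \<in> (\<lambda>e. f ` e) ` F"
      by blast
  qed
qed

definition edges :: "nat \<Rightarrow> (nat \<Rightarrow> nat) \<Rightarrow> nat set set" where
  "edges N p = (\<lambda>j. {p j, p (Suc j mod N)}) ` {..<N}"

definition path_index :: "nat \<Rightarrow> (nat \<Rightarrow> nat) \<Rightarrow> nat \<Rightarrow> nat" where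
  "path_index N p x = the_inv_into {..<N} p x"

definition path_succ :: "nat \<Rightarrow> (nat \<Rightarrow> nat) \<Rightarrow> nat \<Rightarrow> nat" where
  "path_succ N p x = p (Suc (path_index N p x) mod N)"

definition path_pred :: "nat \<Rightarrow> (nat \<Rightarrow> nat) \<Rightarrow> nat \<Rightarrow> nat" where
  "path_pred N p x = p ((path_index N p x + N - 1) mod N)"

lemma Suc_pred_mod: "k < N \<Longrightarrow> Suc ((k + N - 1) mod N) mod N = k"
  by (cases k) (auto simp: mod_Suc)

lemma pred_Suc_mod: "j < N \<Longrightarrow> (Suc j mod N + N - 1) mod N = j"
  by (cases "Suc j = N") auto

context
  fixes N :: nat and p :: "nat \<Rightarrow> nat"
  assumes path: "is_path N p"
begin

lemma path_less: "j < N \<Longrightarrow> p j < N"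
  using path by (auto simp: is_path_def bij_betw_def)

lemma path_inj_iff: "i < N \<Longrightarrow> j < N \<Longrightarrow> p i = p j \<longleftrightarrow> i = j"
  using path by (auto simp: is_path_def bij_betw_def inj_on_eq_iff)

lemma path_index_less: "x < N \<Longrightarrow> path_index N p x < N"
  using path unfolding is_path_def path_index_def
  by (metis bij_betw_the_inv_into bij_betw_apply lessThan_iff)

lemma path_path_index: "x < N \<Longrightarrow> p (path_index N p x) = x"
  using path unfolding is_path_def path_index_def
  by (simp add: f_the_inv_into_f_bij_betw)

lemma path_index_path: "j < N \<Longrightarrow> path_index N p (p j) = j"
  using path unfolding is_path_def path_index_def
  by (simp add: bij_betw_def the_inv_into_f_f)

lemma edges_Pow: "edges N p \<subseteq> Pow {..<N}"
  by (auto simp: edges_def path_less)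

lemma edges_subset_doubletons:
  assumes "N \<ge> 2"
  shows "edges N p \<subseteq> {{a, b} | a b. a < N \<and> b < N \<and> a \<noteq> b}"
proof
  fix e assume "e \<in> edges N p"
  then obtain j where j: "j < N" "e = {p j, p (Suc j mod N)}"
    by (auto simp: edges_def)
  have "Suc j mod N \<noteq> j"
    using assms j by (cases "Suc j = N") auto
  then have "p j \<noteq> p (Suc j mod N)"
    using j by (simp add: path_inj_iff)
  moreover have "p j < N" "p (Suc j mod N) < N"
    using j by (simp_all add: path_less)
  ultimately show "e \<in> {{a, b} | a b. a < N \<and> b < N \<and> a \<noteq> b}"
    using j by blast
qed

lemma neighbours_edges:
  assumes "x < N"
  shows "neighbours (edges N p) x = {path_succ N p x, path_pred N p x}"
proof (intro equalityI subsetI)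
  fix y assume "y \<in> neighbours (edges N p) x"
  then obtain j where j: "j < N" "{x, y} = {p j, p (Suc j mod N)}"
    by (auto simp: neighbours_def edges_def)
  then have "x = p j \<and> y = p (Suc j mod N) \<or> x = p (Suc j mod N) \<and> y = p j"
    by (auto simp: doubleton_eq_iff)
  then show "y \<in> {path_succ N p x, path_pred N p x}"
  proof
    assume "x = p j \<and> y = p (Suc j mod N)"
    then show ?thesis
      using j by (simp add: path_succ_def path_index_path)
  next
    assume xy: "x = p (Suc j mod N) \<and> y = p j"
    then have "path_index N p x = Suc j mod N"
      using j by (simp add: path_index_path)
    then show ?thesis
      using xy j pred_Suc_mod[of j N] by (simp add: path_pred_def)
  qed
next
  let ?k = "path_index N p x"
  have k: "?k < N" "p ?k = x"
    using assms by (simp_all add: path_index_less path_path_index)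
  have "{p ?k, p (Suc ?k mod N)} \<in> edges N p"
    using k unfolding edges_def by blast
  then have succ: "{x, path_succ N p x} \<in> edges N p"
    using k by (simp add: path_succ_def)
  define j where "j = (?k + N - 1) mod N"
  have "j < N"
    using k by (simp add: j_def)
  then have "{p j, p (Suc j mod N)} \<in> edges N p"
    unfolding edges_def by blast
  moreover have "Suc j mod N = ?k"
    unfolding j_def by (rule Suc_pred_mod[OF k(1)])
  ultimately have pred: "{x, path_pred N p x} \<in> edges N p"
    using k unfolding path_pred_def j_def[symmetric] by (simp add: insert_commute)
  show "y \<in> neighbours (edges N p) x" if "y \<in> {path_succ N p x, path_pred N p x}" for y
    using that succ pred by (auto simp: neighbours_def)
qed

lemma neighbours_edges_subset:
  assumes "N \<ge> 2"
  shows "neighbours (edges N p) x \<subseteq> {..<N} - {x}"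
proof
  fix y assume "y \<in> neighbours (edges N p) x"
  then obtain a b where "{x, y} = {a, b}" "a < N" "b < N" "a \<noteq> b"
    using edges_subset_doubletons[OF assms] unfolding neighbours_def by blast
  then show "y \<in> {..<N} - {x}"
    by (auto simp: doubleton_eq_iff)
qed

lemma edge_col_eq:
  assumes "x < N"
  defines "a \<equiv> node_offset N x (path_succ N p x)" and "b \<equiv> node_offset N x (path_pred N p x)"
  shows "edge_col N p x = (min a b, max a b)"
proof -
  let ?k = "path_index N p x"
  have k: "?k < N" "p ?k = x"
    using assms by (simp_all add: path_index_less path_path_index)
  have "zero_half N (step N p ?k) = a"
    using k by (simp add: a_def node_offset_def step_eq_centred_diff path_succ_def)
  moreover have "zero_half N (- step N p ((?k + N - 1) mod N)) = b"
    using k Suc_pred_mod[OF k(1)]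
    by (simp add: b_def node_offset_def step_eq_centred_diff path_pred_def zero_half_uminus_centred_diff)
  ultimately show ?thesis
    by (simp add: edge_col_def path_index_def Let_def)
qed

end

lemma min_max_eq_iff: "(min a b, max a b) = (min c d, max c d) \<longleftrightarrow> {a, b} = {c, d :: 'a :: linorder}"
  by (auto simp: min_def max_def doubleton_eq_iff split: if_splits)

lemma edge_col_eq_iff:
  assumes "is_path N p" "is_path N q" "x < N" "y < N"
  shows "edge_col N p x = edge_col N q y \<longleftrightarrow>
    node_offset N x ` neighbours (edges N p) x = node_offset N y ` neighbours (edges N q) y"
  unfolding edge_col_eq[OF assms(1,3)] edge_col_eq[OF assms(2,4)] min_max_eq_iff
  using assms by (simp add: neighbours_edges)

lemma edge_col_rotate_iff:
  fixes k :: int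
  assumes "N \<ge> 2" "is_path N p" "is_path N q" "n < N"
  defines "r \<equiv> rotate_node N k"
  shows "edge_col N q n = edge_col N p (r n) \<longleftrightarrow>
    neighbours (edges N p) (r n) = r ` neighbours (edges N q) n"
proof -
  have "0 < N" using assms by simp
  then have r: "r n < N" "inj_on r {..<N}"
    using bij_betw_rotate_node by (auto simp: r_def rotate_node_less bij_betw_def)
  have q_nbrs: "neighbours (edges N q) n \<subseteq> {..<N} - {n}"
    using assms by (simp add: neighbours_edges_subset)
  then have r_q_nbrs: "r ` neighbours (edges N q) n \<subseteq> {..<N} - {r n}"
    using r assms by (auto simp: inj_on_eq_iff r_def rotate_node_less)
  have p_nbrs: "neighbours (edges N p) (r n) \<subseteq> {..<N} - {r n}"
    using assms by (simp add: neighbours_edges_subset)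
  have "node_offset N n ` neighbours (edges N q) n = node_offset N (r n) ` r ` neighbours (edges N q) n"
    using q_nbrs assms by (auto simp: image_image r_def node_offset_rotate_node intro!: image_cong)
  then have "edge_col N q n = edge_col N p (r n) \<longleftrightarrow>
      node_offset N (r n) ` r ` neighbours (edges N q) n = node_offset N (r n) ` neighbours (edges N p) (r n)"
    using assms r by (simp add: edge_col_eq_iff)
  also have "\<dots> \<longleftrightarrow> r ` neighbours (edges N q) n = neighbours (edges N p) (r n)"
    by (rule inj_on_image_eq_iff[OF inj_on_node_offset[OF r(1)] r_q_nbrs p_nbrs])
  finally show ?thesis by auto
qed

lemma edge_cols_rotate_iff_edges:
  assumes "N \<ge> 2" "is_path N p" "is_path N q"
  shows "(\<forall>n<N. edge_col N q n = edge_col N p (rotate_node N k n)) \<longleftrightarrow>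
    (\<lambda>e. rotate_node N k ` e) ` edges N q = edges N p"
proof -
  have edges_below: "edges N r \<subseteq> {{a, b} | a b. a \<in> {..<N} \<and> b \<in> {..<N}}" if "is_path N r" for r
    using edges_subset_doubletons[OF that assms(1)] by blast
  have "(\<lambda>e. rotate_node N k ` e) ` edges N q = edges N p \<longleftrightarrow>
      (\<forall>n\<in>{..<N}. neighbours (edges N p) (rotate_node N k n) = rotate_node N k ` neighbours (edges N q) n)"
    by (rule image_edges_eq_iff_neighbours[OF bij_betw_rotate_node edges_below[OF assms(3)]
          edges_below[OF assms(2)]]) (use assms in simp)
  then show ?thesis
    using assms by (simp add: edge_col_rotate_iff Ball_def)
qed


section \<open>Chords of the circle\<close>

lemma extreme_point_of_norm_max:
  fixes S :: "'a::euclidean_space set"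
  assumes "z \<in> S" and max: "\<And>y. y \<in> S \<Longrightarrow> norm y \<le> norm z"
  shows "z extreme_point_of S"
  unfolding extreme_point_of_def
proof (intro conjI ballI notI)
  show "z \<in> S"
    by (fact \<open>z \<in> S\<close>)
  fix a b assume "a \<in> S" "b \<in> S" "z \<in> open_segment a b"
  then have "norm z < norm a \<or> norm z < norm b"
    using dist_decreases_open_segment[of z a b 0] by simp
  then show False
    using max[OF \<open>a \<in> S\<close>] max[OF \<open>b \<in> S\<close>] by linarith
qed

lemma convex_hull_inter_sphere:
  fixes S :: "'a::euclidean_space set"
  assumes "S \<subseteq> sphere 0 r"
  shows "convex hull S \<inter> sphere 0 r = S"
proof
  show "S \<subseteq> convex hull S \<inter> sphere 0 r"
    using assms hull_subset[of S convex] by blast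
  have hull_cball: "convex hull S \<subseteq> cball 0 r"
    by (rule hull_minimal) (use assms sphere_cball in blast, simp add: convex_cball)
  show "convex hull S \<inter> sphere 0 r \<subseteq> S"
  proof
    fix z assume z: "z \<in> convex hull S \<inter> sphere 0 r"
    have "z extreme_point_of (convex hull S)"
    proof (rule extreme_point_of_norm_max)
      show "z \<in> convex hull S"
        using z by simp
      show "norm y \<le> norm z" if "y \<in> convex hull S" for y
        using that hull_cball z by auto
    qed
    then show "z \<in> S"
      by (rule extreme_point_of_convex_hull)
  qed
qed

lemma norm_node [simp]: "norm (node N j) = 1"
  by (simp add: node_def)

lemma nodes_subset_sphere: "node N ` A \<subseteq> sphere 0 1"
  by auto

lemma cis_int_mod:
  assumes "N > 0"
  shows "cis (- 2 * pi * of_int (i mod int N) / N) = cis (- 2 * pi * of_int i / N)"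
proof -
  have "i mod int N = i - int N * (i div int N)"
    by (simp add: minus_div_mult_eq_mod[symmetric] mult.commute)
  then have mod_real: "real_of_int (i mod int N) = of_int i - real N * of_int (i div int N)"
    by simp
  have "- 2 * pi * of_int (i mod int N) / N = - 2 * pi * of_int i / N + 2 * pi * of_int (i div int N)"
    using assms unfolding mod_real by (simp add: field_simps right_diff_distrib)
  then have "cis (- 2 * pi * of_int (i mod int N) / N)
      = cis (- 2 * pi * of_int i / N) * cis (2 * pi * of_int (i div int N))"
    by (simp only: cis_mult)
  also have "cis (2 * pi * of_int (i div int N)) = 1"
    by (rule cis_multiple_2pi) simp
  finally show ?thesis
    by simp
qed

lemma node_rotate_node:
  assumes "N > 0"
  shows "node N (rotate_node N k j) = cis (- 2 * pi * of_int k / N) * node N j"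
proof -
  have "node N (rotate_node N k j) = cis (- 2 * pi * of_int ((int j + k) mod int N) / N)"
    using assms by (simp add: node_def rotate_node_def)
  also have "\<dots> = cis (- 2 * pi * of_int (int j + k) / N)"
    by (rule cis_int_mod[OF assms])
  also have "- 2 * pi * of_int (int j + k) / N = - 2 * pi * of_int k / N + - 2 * pi * real j / N"
    using assms by (simp add: field_simps)
  finally show ?thesis
    by (simp add: node_def cis_mult)
qed

lemma cis_2pi_eq_1_imp_Ints:
  assumes "cis (2 * pi * x) = 1"
  shows "x \<in> \<int>"
proof -
  obtain n :: int where "2 * pi * x = of_int (2 * n) * pi"
    using assms unfolding cis_conv_exp exp_eq_1 by auto
  then have "x = of_int n"
    using pi_gt_zero by (simp add: field_simps)
  then show ?thesis
    by simp
qed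

lemma inj_on_node: "inj_on (node N) {..<N}"
proof (rule inj_onI)
  fix a b assume "a \<in> {..<N}" "b \<in> {..<N}" and eq: "node N a = node N b"
  then have a: "a < N" and b: "b < N" by auto
  have "cis (2 * pi * ((real b - real a) / N)) = node N a / node N b"
    unfolding node_def cis_divide using a by (intro arg_cong[where f = cis]) (simp add: field_simps)
  also have "\<dots> = 1"
    using eq by (simp add: node_def)
  finally have "(real b - real a) / N \<in> \<int>"
    by (rule cis_2pi_eq_1_imp_Ints)
  then obtain n :: int where "(real b - real a) / N = of_int n"
    by (elim Ints_cases)
  then have "real_of_int (int b - int a) = real_of_int (int N * n)"
    using a by (simp add: field_simps)
  then have "int b mod int N = int a mod int N"
    by (simp only: of_int_eq_iff mod_eq_dvd_iff) simp
  then show "a = b"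
    using a b by simp
qed

lemma shape_eq_hulls: "shape N p = (\<lambda>e. convex hull (node N ` e)) ` edges N p"
  unfolding shape_def edges_def chord_def image_image segment_convex_hull by simp

lemma rotate_convex_hull_nodes:
  assumes "N > 0"
  shows "(\<lambda>z. cis (- 2 * pi * of_int k / N) * z) ` (convex hull (node N ` e))
    = convex hull (node N ` rotate_node N k ` e)"
  using assms
  by (simp add: convex_hull_linear_image bounded_linear.linear[OF bounded_linear_mult_right]
      image_image node_rotate_node)

lemma inj_on_convex_hull_nodes: "inj_on (\<lambda>e. convex hull (node N ` e)) (Pow {..<N})"
proof (rule inj_onI)
  fix e e' assume e: "e \<in> Pow {..<N}" "e' \<in> Pow {..<N}"
    and hulls: "convex hull (node N ` e) = convex hull (node N ` e')"
  have "node N ` e = convex hull (node N ` e) \<inter> sphere 0 1"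
    by (rule convex_hull_inter_sphere[OF nodes_subset_sphere, symmetric])
  also have "\<dots> = node N ` e'"
    unfolding hulls by (rule convex_hull_inter_sphere[OF nodes_subset_sphere])
  finally show "e = e'"
    using inj_on_image_eq_iff[OF inj_on_node] e by blast
qed

lemma shapes_equiv_sym: "shapes_equiv S T \<Longrightarrow> shapes_equiv T S"
proof -
  assume "shapes_equiv S T"
  then obtain \<theta> where \<theta>: "(\<lambda>C. (\<lambda>z. cis \<theta> * z) ` C) ` S = T"
    unfolding shapes_equiv_def by blast
  have "(\<lambda>z. cis (- \<theta>) * z) ` (\<lambda>z. cis \<theta> * z) ` C = C" for C
    by (simp add: image_image mult.assoc[symmetric] cis_mult)
  then have "(\<lambda>C. (\<lambda>z. cis (- \<theta>) * z) ` C) ` T = S"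
    unfolding \<theta>[symmetric] by (simp add: image_image)
  then show "shapes_equiv T S"
    unfolding shapes_equiv_def by blast
qed

lemma rotate_shape:
  assumes "N > 0"
  shows "(\<lambda>C. (\<lambda>z. cis (- 2 * pi * of_int k / N) * z) ` C) ` shape N p
    = (\<lambda>e. convex hull (node N ` e)) ` (\<lambda>e. rotate_node N k ` e) ` edges N p"
  by (simp only: shape_eq_hulls image_image rotate_convex_hull_nodes[OF assms])

lemma rotation_between_shapes:
  assumes "N > 0" and \<theta>: "(\<lambda>C. (\<lambda>z. cis \<theta> * z) ` C) ` shape N p = shape N q"
  obtains k where "cis \<theta> = cis (- 2 * pi * of_int k / N)"
proof -
  let ?hull = "\<lambda>e. convex hull (node N ` e)"
  define a where "a = p 0"
  have "{a, p (Suc 0 mod N)} \<in> edges N p"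
    using assms by (auto simp: edges_def a_def)
  then have "(\<lambda>z. cis \<theta> * z) ` ?hull {a, p (Suc 0 mod N)} \<in> shape N q"
    unfolding \<theta>[symmetric] unfolding shape_eq_hulls by blast
  then obtain e where e: "(\<lambda>z. cis \<theta> * z) ` ?hull {a, p (Suc 0 mod N)} = ?hull e"
    unfolding shape_eq_hulls by blast
  have "node N a \<in> ?hull {a, p (Suc 0 mod N)}"
    by (simp add: hull_inc)
  then have "cis \<theta> * node N a \<in> ?hull e \<inter> sphere 0 1"
    using e by (auto simp: norm_mult)
  then obtain m where m: "cis \<theta> * node N a = node N m"
    unfolding convex_hull_inter_sphere[OF nodes_subset_sphere] by blast
  have "node N a \<noteq> 0"
    by (simp add: node_def)
  then have "cis \<theta> = node N m / node N a"
    using m by (simp add: nonzero_eq_divide_eq)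
  also have "\<dots> = cis (- 2 * pi * of_int (int m - int a) / N)"
    unfolding node_def cis_divide using assms(1) by (intro arg_cong[where f = cis]) (simp add: field_simps)
  finally show ?thesis
    by (rule that)
qed

lemma shapes_equiv_iff_rotate_edges:
  assumes "N > 0" "is_path N p" "is_path N q"
  shows "shapes_equiv (shape N p) (shape N q) \<longleftrightarrow> (\<exists>k. (\<lambda>e. rotate_node N k ` e) ` edges N p = edges N q)"
proof
  let ?hull = "\<lambda>e. convex hull (node N ` e)"
  assume "shapes_equiv (shape N p) (shape N q)"
  then obtain \<theta> where \<theta>: "(\<lambda>C. (\<lambda>z. cis \<theta> * z) ` C) ` shape N p = shape N q"
    unfolding shapes_equiv_def by blast
  obtain k where k: "cis \<theta> = cis (- 2 * pi * of_int k / N)"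
    by (rule rotation_between_shapes[OF assms(1) \<theta>])
  have "?hull ` (\<lambda>e. rotate_node N k ` e) ` edges N p = ?hull ` edges N q"
    using \<theta> unfolding k rotate_shape[OF assms(1)] unfolding shape_eq_hulls .
  moreover have "(\<lambda>e. rotate_node N k ` e) ` edges N p \<subseteq> Pow {..<N}"
    by (simp add: image_subset_iff rotate_node_less[OF assms(1)])
  ultimately have "(\<lambda>e. rotate_node N k ` e) ` edges N p = edges N q"
    by (simp only: inj_on_image_eq_iff[OF inj_on_convex_hull_nodes _ edges_Pow[OF assms(3)]])
  then show "\<exists>k. (\<lambda>e. rotate_node N k ` e) ` edges N p = edges N q" ..
next
  assume "\<exists>k. (\<lambda>e. rotate_node N k ` e) ` edges N p = edges N q"
  then obtain k where k: "(\<lambda>e. rotate_node N k ` e) ` edges N p = edges N q" ..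
  have "(\<lambda>C. (\<lambda>z. cis (- 2 * pi * of_int k / N) * z) ` C) ` shape N p = shape N q"
    by (simp only: rotate_shape[OF assms(1)] k shape_eq_hulls[of N q])
  then show "shapes_equiv (shape N p) (shape N q)"
    unfolding shapes_equiv_def by blast
qed

theorem mainTheorem5:
  fixes N :: nat and p p' :: "nat \<Rightarrow> nat"
  assumes "N \<ge> 2" and "is_path N p" and "is_path N p'"
  shows "shapes_equiv (shape N p) (shape N p') \<longleftrightarrow>
    (\<exists>k::int. \<forall>n<N. edge_col N p' n = edge_col N p (nat ((int n + k) mod int N)))"
proof -
  have "shapes_equiv (shape N p) (shape N p') \<longleftrightarrow> shapes_equiv (shape N p') (shape N p)"
    using shapes_equiv_sym by blast
  also have "\<dots> \<longleftrightarrow> (\<exists>k. (\<lambda>e. rotate_node N k ` e) ` edges N p' = edges N p)"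
    using assms by (simp add: shapes_equiv_iff_rotate_edges)
  also have "\<dots> \<longleftrightarrow> (\<exists>k. \<forall>n<N. edge_col N p' n = edge_col N p (rotate_node N k n))"
    using assms by (simp add: edge_cols_rotate_iff_edges)
  finally show ?thesis
    by (simp add: rotate_node_def)
qed

end
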